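(* Under assumptions (A1)–(A6), for (almost) every $x$, $$\psi(x) = P(Y(1,0)=0\mid Y(1,1)=1,M(1)=1,X=x)\,P(M(0)=0\mid M(1)=1,X=x),$$ and consequently $$\psi(x)\le P(M(0)=0\mid M(1)=1,X=x) = 1-\frac{\gamma_0(x)}{\gamma_1(x)}.$$
   Context: Observed data $O=(X,A,M,Y)$ with covariates $X\in\mathbb{R}^d$, binary exposure $A$, binary mediator $M$, binary outcome $Y$. For $a,m\in\{0,1\}$, $Y(a,m)$ is the potential outcome under $A=a,M=m$, $M(a)$ the potential mediator, $Y(a):=Y(a,M(a))$, cross-world $Y(a,M(a'))$ by substitution, all on a common probability space with $O$. $\gamma_a(x)=P(M=1\mid A=a,X=x)$. $\psi(x)=P(Y(1,M(0))=0,\,Y(0,M(0))=0\mid Y(1,M(1))=1,M(1)=1,X=x)$. Assumptions: (A1) $A=a,M=m\Rightarrow Y=Y(a,m)$ and $A=a\Rightarrow M=M(a)$. (A2) $Y(1,1)\ge Y(1,0)\ge Y(0,0)$, $Y(1,1)\ge Y(0,1)$, $M(1)\ge M(0)$. (A3) $A\perp\{Y(1,1),Y(1,0),Y(0,1),Y(0,0),M(1),M(0)\}\mid X$. (A4) $\{Y(1,1),Y(1,0),Y(0,1),Y(0,0)\}\perp\{M(1),M(0)\}\mid X$. (A5) for some $\epsilon>0$, $P\{\min_{a,m}P(A=a,M=m\mid X)\ge\epsilon\}=1$. (A6) $P\{P(Y=1\mid A=1,M=1,X)\ge\epsilon\}=1$. *)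

theory Defs
  imports "HOL-Probability.Probability"
begin

definition sigmaX :: "'a measure \<Rightarrow> ('a \<Rightarrow> 'x::topological_space) \<Rightarrow> 'a measure" where
  "sigmaX M X = vimage_algebra (space M) X borel"

definition cprobX :: "'a measure \<Rightarrow> ('a \<Rightarrow> 'x::topological_space) \<Rightarrow> 'a set \<Rightarrow> 'a \<Rightarrow> real" where
  "cprobX M X E = real_cond_exp M (sigmaX M X) (indicator (E \<inter> space M))"

definition ccprobX :: "'a measure \<Rightarrow> ('a \<Rightarrow> 'x::topological_space) \<Rightarrow> 'a set \<Rightarrow> 'a set \<Rightarrow> 'a \<Rightarrow> real" where
  "ccprobX M X E C = (\<lambda>\<omega>. cprobX M X (E \<inter> C) \<omega> / cprobX M X C \<omega>)"

definition cond_indepX ::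
  "'a measure \<Rightarrow> ('a \<Rightarrow> 'x::topological_space) \<Rightarrow> 'u measure \<Rightarrow> ('a \<Rightarrow> 'u) \<Rightarrow> 'v measure \<Rightarrow> ('a \<Rightarrow> 'v) \<Rightarrow> bool" where
  "cond_indepX M X MU U MV V \<longleftrightarrow>
     (\<forall>S\<in>sets MU. \<forall>T\<in>sets MV. AE \<omega> in M.
        cprobX M X (U -` S \<inter> V -` T \<inter> space M) \<omega> =
        cprobX M X (U -` S \<inter> space M) \<omega> * cprobX M X (V -` T \<inter> space M) \<omega>)"

end

theory Submission imports Defs begin

text \<open>Given \<open>Y(1,M(1)) = 1\<close> and \<open>M(1) = 1\<close>, the outcome \<open>Y(1,M(0)) = 0\<close> forces \<open>M(0) = 0\<close>,
  and then \<open>Y(0,0) \<le> Y(1,0)\<close> makes \<open>Y(0,M(0)) = 0\<close> redundant. So the event defining \<open>\<psi>\<close> is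
  \<open>{Y(1,1) = 1, Y(1,0) = 0} \<inter> {M(1) = 1, M(0) = 0}\<close>, an outcome event intersected with a
  mediator event, and so is the conditioning event \<open>{Y(1,1) = 1} \<inter> {M(1) = 1}\<close>. By (A4)
  all these conditional probabilities factorise, which gives \<open>\<psi> = p\<^sub>1 p\<^sub>2\<close> and \<open>\<psi> \<le> p\<^sub>2\<close>
  (even where \<open>P(M(1) = 1 | X) = 0\<close>, since division by zero yields zero).
  Because \<open>M(0) \<le> M(1)\<close>, \<open>p\<^sub>2 = 1 - P(M(0) = 1 | X) / P(M(1) = 1 | X)\<close>, and consistency with (A3)
  gives \<open>P(M = 1, A = a | X) = P(A = a | X) P(M(a) = 1 | X)\<close>, so \<open>\<gamma>\<^sub>a = P(M(a) = 1 | X)\<close> once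
  (A5) rules out vanishing denominators.\<close>

lemma cprobX_cong: "E \<inter> space M = F \<inter> space M \<Longrightarrow> cprobX M X E = cprobX M X F"
  unfolding cprobX_def by simp

lemma cprobX_mult_of_cond_indepX:
  assumes "cond_indepX M X (count_space UNIV) U (count_space UNIV) V"
  shows "AE \<omega> in M. cprobX M X {\<omega>. P (U \<omega>) \<and> Q (V \<omega>)} \<omega> =
    cprobX M X {\<omega>. P (U \<omega>)} \<omega> * cprobX M X {\<omega>. Q (V \<omega>)} \<omega>"
proof -
  have "AE \<omega> in M. cprobX M X (U -` Collect P \<inter> V -` Collect Q \<inter> space M) \<omega> =
      cprobX M X (U -` Collect P \<inter> space M) \<omega> * cprobX M X (V -` Collect Q \<inter> space M) \<omega>"
    using assms unfolding cond_indepX_def sets_count_space by blast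
  moreover have "cprobX M X {\<omega>. P (U \<omega>) \<and> Q (V \<omega>)} = cprobX M X (U -` Collect P \<inter> V -` Collect Q \<inter> space M)"
    "cprobX M X {\<omega>. P (U \<omega>)} = cprobX M X (U -` Collect P \<inter> space M)"
    "cprobX M X {\<omega>. Q (V \<omega>)} = cprobX M X (V -` Collect Q \<inter> space M)"
    by (auto intro: cprobX_cong)
  ultimately show ?thesis by (simp only:)
qed

lemma cond_indepX_comp_right:
  assumes "cond_indepX M X MU U (count_space UNIV) V"
  shows "cond_indepX M X MU U (count_space UNIV) (\<lambda>\<omega>. f (V \<omega>))"
  unfolding cond_indepX_def
proof (intro ballI)
  fix S T
  assume "S \<in> sets MU"
  then have "AE \<omega> in M. cprobX M X (U -` S \<inter> V -` (f -` T) \<inter> space M) \<omega> =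
      cprobX M X (U -` S \<inter> space M) \<omega> * cprobX M X (V -` (f -` T) \<inter> space M) \<omega>"
    using assms unfolding cond_indepX_def sets_count_space by blast
  moreover have "(\<lambda>\<omega>. f (V \<omega>)) -` T = V -` (f -` T)" by auto
  ultimately show "AE \<omega> in M. cprobX M X (U -` S \<inter> (\<lambda>\<omega>. f (V \<omega>)) -` T \<inter> space M) \<omega> =
      cprobX M X (U -` S \<inter> space M) \<omega> * cprobX M X ((\<lambda>\<omega>. f (V \<omega>)) -` T \<inter> space M) \<omega>"
    by (simp only:)
qed

lemma ratio_product_bound:
  fixes y y' m m' :: real
  assumes "0 \<le> y'" "y' \<le> y" "0 \<le> m'" "0 \<le> m"
  shows "y' * m' / (y * m) = y' * m / (y * m) * (m' / m)" and "y' * m' / (y * m) \<le> m' / m"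
proof -
  have split: "y' * m' / (y * m) = y' / y * (m' / m)" by simp
  then show "y' * m' / (y * m) = y' * m / (y * m) * (m' / m)"
    by (cases "m = 0") simp_all
  have "y' / y \<le> 1"
    using assms by (cases "y = 0") (simp_all add: divide_le_eq_1)
  then have "y' / y * (m' / m) \<le> m' / m"
    using assms by (intro mult_left_le_one_le) auto
  with split show "y' * m' / (y * m) \<le> m' / m"
    by (simp only:)
qed

locale prob_space_covariate = prob_space M for M :: "'a measure" +
  fixes X :: "'a \<Rightarrow> 'x::topological_space"
  assumes X_measurable: "X \<in> borel_measurable M"
begin

sublocale sigma_finite_subalgebra M "sigmaX M X"
proof -
  have "subalgebra M (sigmaX M X)"
    unfolding subalgebra_def sigmaX_def
    using sets_vimage_algebra2[of X "space M" borel] measurable_sets[OF X_measurable]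
      measurable_space[OF X_measurable] by auto
  then have "finite_measure_subalgebra M (sigmaX M X)"
    by (simp add: finite_measure_subalgebra_def finite_measure_subalgebra_axioms_def finite_measure_axioms)
  then show "sigma_finite_subalgebra M (sigmaX M X)"
    by (rule finite_measure_subalgebra_is_sigma_finite)
qed

lemma integrable_indicator_Collect:
  assumes "Measurable.pred M P"
  shows "integrable M (indicator ({\<omega>. P \<omega>} \<inter> space M) :: 'a \<Rightarrow> real)"
proof -
  have "{\<omega>. P \<omega>} \<inter> space M = {\<omega> \<in> space M. P \<omega>}" by auto
  with assms show ?thesis
    by (simp add: emeasure_finite less_top[symmetric])
qed

lemma cprobX_nonneg:
  assumes [measurable]: "Measurable.pred M P"
  shows "AE \<omega> in M. cprobX M X {\<omega>. P \<omega>} \<omega> \<ge> 0"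
  unfolding cprobX_def by (rule real_cond_exp_pos) (use integrable_indicator_Collect[OF assms] in auto)

lemma cprobX_mono:
  assumes "Measurable.pred M P" "Measurable.pred M Q" "\<And>\<omega>. \<omega> \<in> space M \<Longrightarrow> P \<omega> \<Longrightarrow> Q \<omega>"
  shows "AE \<omega> in M. cprobX M X {\<omega>. P \<omega>} \<omega> \<le> cprobX M X {\<omega>. Q \<omega>} \<omega>"
  unfolding cprobX_def
proof (rule real_cond_exp_mono)
  show "AE \<omega> in M. indicator ({\<omega>. P \<omega>} \<inter> space M) \<omega> \<le> (indicator ({\<omega>. Q \<omega>} \<inter> space M) \<omega> :: real)"
    using assms(3) by (intro AE_I2) (auto simp: indicator_def)
qed (intro integrable_indicator_Collect assms)+

lemma cprobX_disjoint_add: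
  assumes "Measurable.pred M P" "Measurable.pred M Q" "\<And>\<omega>. \<omega> \<in> space M \<Longrightarrow> \<not> (P \<omega> \<and> Q \<omega>)"
  shows "AE \<omega> in M. cprobX M X {\<omega>. P \<omega> \<or> Q \<omega>} \<omega> = cprobX M X {\<omega>. P \<omega>} \<omega> + cprobX M X {\<omega>. Q \<omega>} \<omega>"
proof -
  have "indicator ({\<omega>. P \<omega> \<or> Q \<omega>} \<inter> space M) =
      (\<lambda>\<omega>. indicator ({\<omega>. P \<omega>} \<inter> space M) \<omega> + (indicator ({\<omega>. Q \<omega>} \<inter> space M) \<omega> :: real))"
    using assms(3) by (auto simp: indicator_def fun_eq_iff)
  then show ?thesis
    unfolding cprobX_def by (simp only:) (intro real_cond_exp_add integrable_indicator_Collect assms)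
qed

lemma cprobX_outcome_mediator_factorisation:
  assumes [measurable]: "\<And>a m. Measurable.pred M (Ypo a m)" "\<And>a. Measurable.pred M (Mpo a)"
    and mono: "\<forall>\<omega>\<in>space M. Ypo False False \<omega> \<longrightarrow> Ypo True False \<omega>"
    and indep: "cond_indepX M X (count_space UNIV)
      (\<lambda>\<omega>. (Ypo True True \<omega>, Ypo True False \<omega>, Ypo False True \<omega>, Ypo False False \<omega>))
      (count_space UNIV) (\<lambda>\<omega>. (Mpo True \<omega>, Mpo False \<omega>))"
  shows "AE \<omega> in M.
    (let \<psi> = ccprobX M X {\<omega>'. \<not> Ypo True (Mpo False \<omega>') \<omega>' \<and> \<not> Ypo False (Mpo False \<omega>') \<omega>'}
                       {\<omega>'. Ypo True (Mpo True \<omega>') \<omega>' \<and> Mpo True \<omega>'} \<omega>;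
         p1 = ccprobX M X {\<omega>'. \<not> Ypo True False \<omega>'} {\<omega>'. Ypo True True \<omega>' \<and> Mpo True \<omega>'} \<omega>;
         p2 = ccprobX M X {\<omega>'. \<not> Mpo False \<omega>'} {\<omega>'. Mpo True \<omega>'} \<omega>
     in \<psi> = p1 * p2 \<and> \<psi> \<le> p2)"
proof -
  note factor = cprobX_mult_of_cond_indepX[OF indep]
  have mediated: "\<And>a b \<omega>. Ypo a (Mpo b \<omega>) \<omega> = (if Mpo b \<omega> then Ypo a True \<omega> else Ypo a False \<omega>)"
    by simp
  have psi_event: "cprobX M X ({\<omega>'. \<not> Ypo True (Mpo False \<omega>') \<omega>' \<and> \<not> Ypo False (Mpo False \<omega>') \<omega>'}
      \<inter> {\<omega>'. Ypo True (Mpo True \<omega>') \<omega>' \<and> Mpo True \<omega>'}) =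
    cprobX M X {\<omega>. Ypo True True \<omega> \<and> \<not> Ypo True False \<omega> \<and> Mpo True \<omega> \<and> \<not> Mpo False \<omega>}"
    by (rule cprobX_cong) (use mono in \<open>auto simp: mediated\<close>)
  have events:
    "{\<omega>'. Ypo True (Mpo True \<omega>') \<omega>' \<and> Mpo True \<omega>'} = {\<omega>. Ypo True True \<omega> \<and> Mpo True \<omega>}"
    "{\<omega>'. \<not> Ypo True False \<omega>'} \<inter> {\<omega>'. Ypo True True \<omega>' \<and> Mpo True \<omega>'} =
      {\<omega>. Ypo True True \<omega> \<and> \<not> Ypo True False \<omega> \<and> Mpo True \<omega>}"
    "{\<omega>'. \<not> Mpo False \<omega>'} \<inter> {\<omega>'. Mpo True \<omega>'} = {\<omega>. Mpo True \<omega> \<and> \<not> Mpo False \<omega>}"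
    by auto
  have "AE \<omega> in M. cprobX M X {\<omega>. Ypo True True \<omega> \<and> \<not> Ypo True False \<omega> \<and> Mpo True \<omega> \<and> \<not> Mpo False \<omega>} \<omega> =
      cprobX M X {\<omega>. Ypo True True \<omega> \<and> \<not> Ypo True False \<omega>} \<omega> * cprobX M X {\<omega>. Mpo True \<omega> \<and> \<not> Mpo False \<omega>} \<omega>"
    using factor[of "\<lambda>(y11, y10, _). y11 \<and> \<not> y10" "\<lambda>(m1, m0). m1 \<and> \<not> m0"] by (simp add: conj_assoc)
  moreover have "AE \<omega> in M. cprobX M X {\<omega>. Ypo True True \<omega> \<and> Mpo True \<omega>} \<omega> =
      cprobX M X {\<omega>. Ypo True True \<omega>} \<omega> * cprobX M X {\<omega>. Mpo True \<omega>} \<omega>"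
    using factor[of "\<lambda>(y11, _). y11" "\<lambda>(m1, _). m1"] by simp
  moreover have "AE \<omega> in M. cprobX M X {\<omega>. Ypo True True \<omega> \<and> \<not> Ypo True False \<omega> \<and> Mpo True \<omega>} \<omega> =
      cprobX M X {\<omega>. Ypo True True \<omega> \<and> \<not> Ypo True False \<omega>} \<omega> * cprobX M X {\<omega>. Mpo True \<omega>} \<omega>"
    using factor[of "\<lambda>(y11, y10, _). y11 \<and> \<not> y10" "\<lambda>(m1, _). m1"] by (simp add: conj_assoc)
  moreover have "AE \<omega> in M. cprobX M X {\<omega>. Ypo True True \<omega> \<and> \<not> Ypo True False \<omega>} \<omega> \<le> cprobX M X {\<omega>. Ypo True True \<omega>} \<omega>"
    by (rule cprobX_mono) auto
  moreover have "AE \<omega> in M. cprobX M X {\<omega>. Ypo True True \<omega> \<and> \<not> Ypo True False \<omega>} \<omega> \<ge> 0"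
    "AE \<omega> in M. cprobX M X {\<omega>. Mpo True \<omega> \<and> \<not> Mpo False \<omega>} \<omega> \<ge> 0"
    "AE \<omega> in M. cprobX M X {\<omega>. Mpo True \<omega>} \<omega> \<ge> 0"
    by (rule cprobX_nonneg; simp)+
  ultimately show ?thesis
  proof eventually_elim
    case (elim \<omega>)
    show ?case
      unfolding Let_def ccprobX_def psi_event unfolding events elim(1-3)
      by (intro conjI ratio_product_bound elim(4-7))
  qed
qed

lemma cprobX_mediator_identification:
  assumes [measurable]: "Measurable.pred M A" "Measurable.pred M Med" "\<And>a. Measurable.pred M (Mpo a)"
    and consistent: "\<forall>\<omega>\<in>space M. Med \<omega> = Mpo (A \<omega>) \<omega>"
    and mono: "\<forall>\<omega>\<in>space M. Mpo False \<omega> \<longrightarrow> Mpo True \<omega>"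
    and indep: "\<And>a. cond_indepX M X (count_space UNIV) A (count_space UNIV) (Mpo a)"
    and positive: "AE \<omega> in M. cprobX M X {\<omega>. A \<omega> \<and> Med \<omega>} \<omega> > 0 \<and> cprobX M X {\<omega>. \<not> A \<omega> \<and> \<not> Med \<omega>} \<omega> > 0"
  shows "AE \<omega> in M. ccprobX M X {\<omega>'. \<not> Mpo False \<omega>'} {\<omega>'. Mpo True \<omega>'} \<omega> =
    1 - ccprobX M X {\<omega>'. Med \<omega>'} {\<omega>'. \<not> A \<omega>'} \<omega> / ccprobX M X {\<omega>'. Med \<omega>'} {\<omega>'. A \<omega>'} \<omega>"
proof -
  have observed:
    "cprobX M X ({\<omega>'. Med \<omega>'} \<inter> {\<omega>'. A \<omega>'}) = cprobX M X {\<omega>. A \<omega> \<and> Mpo True \<omega>}"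
    "cprobX M X ({\<omega>'. Med \<omega>'} \<inter> {\<omega>'. \<not> A \<omega>'}) = cprobX M X {\<omega>. \<not> A \<omega> \<and> Mpo False \<omega>}"
    "cprobX M X {\<omega>. A \<omega> \<and> Med \<omega>} = cprobX M X {\<omega>. A \<omega> \<and> Mpo True \<omega>}"
    "cprobX M X {\<omega>. \<not> A \<omega> \<and> \<not> Med \<omega>} = cprobX M X {\<omega>. \<not> A \<omega> \<and> \<not> Mpo False \<omega>}"
    by (rule cprobX_cong; use consistent in force)+
  have complier_event: "{\<omega>'. \<not> Mpo False \<omega>'} \<inter> {\<omega>'. Mpo True \<omega>'} = {\<omega>. Mpo True \<omega> \<and> \<not> Mpo False \<omega>}"
    by auto
  have mediator_split: "cprobX M X {\<omega>. Mpo True \<omega>} = cprobX M X {\<omega>. (Mpo True \<omega> \<and> \<not> Mpo False \<omega>) \<or> Mpo False \<omega>}"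
    by (rule cprobX_cong) (use mono in auto)
  have "AE \<omega> in M. cprobX M X {\<omega>. A \<omega> \<and> Mpo True \<omega>} \<omega> = cprobX M X {\<omega>. A \<omega>} \<omega> * cprobX M X {\<omega>. Mpo True \<omega>} \<omega>"
    using cprobX_mult_of_cond_indepX[OF indep[of True], of "\<lambda>a. a" "\<lambda>m. m"] by simp
  moreover have "AE \<omega> in M. cprobX M X {\<omega>. \<not> A \<omega> \<and> Mpo False \<omega>} \<omega> =
      cprobX M X {\<omega>. \<not> A \<omega>} \<omega> * cprobX M X {\<omega>. Mpo False \<omega>} \<omega>"
    using cprobX_mult_of_cond_indepX[OF indep[of False], of "\<lambda>a. \<not> a" "\<lambda>m. m"] by simp
  moreover have "AE \<omega> in M. cprobX M X {\<omega>. \<not> A \<omega> \<and> \<not> Mpo False \<omega>} \<omega> =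
      cprobX M X {\<omega>. \<not> A \<omega>} \<omega> * cprobX M X {\<omega>. \<not> Mpo False \<omega>} \<omega>"
    using cprobX_mult_of_cond_indepX[OF indep[of False], of "\<lambda>a. \<not> a" "\<lambda>m. \<not> m"] by simp
  moreover have "AE \<omega> in M. cprobX M X {\<omega>. Mpo True \<omega>} \<omega> =
      cprobX M X {\<omega>. Mpo True \<omega> \<and> \<not> Mpo False \<omega>} \<omega> + cprobX M X {\<omega>. Mpo False \<omega>} \<omega>"
    unfolding mediator_split by (rule cprobX_disjoint_add) auto
  ultimately show ?thesis
    using positive
  proof eventually_elim
    case (elim \<omega>)
    then have "cprobX M X {\<omega>. A \<omega>} \<omega> \<noteq> 0" "cprobX M X {\<omega>. \<not> A \<omega>} \<omega> \<noteq> 0"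
      "cprobX M X {\<omega>. Mpo True \<omega>} \<omega> \<noteq> 0"
      unfolding observed by auto
    with elim show ?case
      unfolding ccprobX_def observed complier_event by (simp add: field_simps)
  qed
qed

end

theorem mainTheorem7:
  fixes M :: "'a measure"
    and X :: "'a \<Rightarrow> real ^ 'd"
    and A Med Y :: "'a \<Rightarrow> bool"
    and Ypo :: "bool \<Rightarrow> bool \<Rightarrow> 'a \<Rightarrow> bool"
    and Mpo :: "bool \<Rightarrow> 'a \<Rightarrow> bool"
  assumes prob: "prob_space M"
    and X_meas: "X \<in> borel_measurable M"
    and A_meas: "A \<in> measurable M (count_space UNIV)"
    and Med_meas: "Med \<in> measurable M (count_space UNIV)"
    and Y_meas: "Y \<in> measurable M (count_space UNIV)"
    and Ypo_meas: "\<And>a m. Ypo a m \<in> measurable M (count_space UNIV)"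
    and Mpo_meas: "\<And>a. Mpo a \<in> measurable M (count_space UNIV)"
    \<comment> \<open>(A1) consistency\<close>
    and A1: "\<And>\<omega> a m. \<omega> \<in> space M \<Longrightarrow> A \<omega> = a \<Longrightarrow> Med \<omega> = m \<Longrightarrow> Y \<omega> = Ypo a m \<omega>"
    and A1': "\<And>\<omega> a. \<omega> \<in> space M \<Longrightarrow> A \<omega> = a \<Longrightarrow> Med \<omega> = Mpo a \<omega>"
    \<comment> \<open>(A2) monotonicity\<close>
    and A2: "\<And>\<omega>. \<omega> \<in> space M \<Longrightarrow>
               Ypo True True \<omega> \<ge> Ypo True False \<omega> \<and> Ypo True False \<omega> \<ge> Ypo False False \<omega> \<and>
               Ypo True True \<omega> \<ge> Ypo False True \<omega> \<and> Mpo True \<omega> \<ge> Mpo False \<omega>"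
    \<comment> \<open>(A3) no unmeasured confounding of exposure\<close>
    and A3: "cond_indepX M X (count_space UNIV) A (count_space UNIV)
               (\<lambda>\<omega>. (Ypo True True \<omega>, Ypo True False \<omega>, Ypo False True \<omega>, Ypo False False \<omega>,
                     Mpo True \<omega>, Mpo False \<omega>))"
    \<comment> \<open>(A4) potential outcomes independent of potential mediators given X\<close>
    and A4: "cond_indepX M X (count_space UNIV)
               (\<lambda>\<omega>. (Ypo True True \<omega>, Ypo True False \<omega>, Ypo False True \<omega>, Ypo False False \<omega>))
               (count_space UNIV) (\<lambda>\<omega>. (Mpo True \<omega>, Mpo False \<omega>))"
    \<comment> \<open>(A5) and (A6) positivity, with a common \<epsilon>\<close>
    and A56: "\<exists>\<epsilon>>0.
               (AE \<omega> in M. \<forall>a m. cprobX M X {\<omega>'. A \<omega>' = a \<and> Med \<omega>' = m} \<omega> \<ge> \<epsilon>) \<and>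
               (AE \<omega> in M. ccprobX M X {\<omega>'. Y \<omega>'} {\<omega>'. A \<omega>' \<and> Med \<omega>'} \<omega> \<ge> \<epsilon>)"
  shows "AE \<omega> in M.
    (let \<psi> = ccprobX M X {\<omega>'. \<not> Ypo True (Mpo False \<omega>') \<omega>' \<and> \<not> Ypo False (Mpo False \<omega>') \<omega>'}
                       {\<omega>'. Ypo True (Mpo True \<omega>') \<omega>' \<and> Mpo True \<omega>'} \<omega>;
         p1 = ccprobX M X {\<omega>'. \<not> Ypo True False \<omega>'} {\<omega>'. Ypo True True \<omega>' \<and> Mpo True \<omega>'} \<omega>;
         p2 = ccprobX M X {\<omega>'. \<not> Mpo False \<omega>'} {\<omega>'. Mpo True \<omega>'} \<omega>;
         \<gamma>0 = ccprobX M X {\<omega>'. Med \<omega>'} {\<omega>'. \<not> A \<omega>'} \<omega>;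
         \<gamma>1 = ccprobX M X {\<omega>'. Med \<omega>'} {\<omega>'. A \<omega>'} \<omega>
     in \<psi> = p1 * p2 \<and> \<psi> \<le> p2 \<and> p2 = 1 - \<gamma>0 / \<gamma>1)"
proof -
  interpret prob_space_covariate M X
    using prob X_meas by (simp add: prob_space_covariate_def prob_space_covariate_axioms_def)
  have mono_Y: "\<forall>\<omega>\<in>space M. Ypo False False \<omega> \<longrightarrow> Ypo True False \<omega>"
    and mono_M: "\<forall>\<omega>\<in>space M. Mpo False \<omega> \<longrightarrow> Mpo True \<omega>"
    and consistent: "\<forall>\<omega>\<in>space M. Med \<omega> = Mpo (A \<omega>) \<omega>"
    using A1' A2 by (auto simp: le_bool_def)
  have indep_M: "cond_indepX M X (count_space UNIV) A (count_space UNIV) (Mpo a)" for a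
    using cond_indepX_comp_right[OF A3, of "\<lambda>(_, _, _, _, m1, m0). if a then m1 else m0"]
    by (cases a) simp_all
  obtain \<epsilon> where "\<epsilon> > 0"
    and positivity: "AE \<omega> in M. \<forall>a m. cprobX M X {\<omega>'. A \<omega>' = a \<and> Med \<omega>' = m} \<omega> \<ge> \<epsilon>"
    using A56 by blast
  have positive: "AE \<omega> in M. cprobX M X {\<omega>. A \<omega> \<and> Med \<omega>} \<omega> > 0 \<and>
      cprobX M X {\<omega>. \<not> A \<omega> \<and> \<not> Med \<omega>} \<omega> > 0"
    using positivity
  proof eventually_elim
    case (elim \<omega>)
    show ?case
      using \<open>\<epsilon> > 0\<close> elim[rule_format, of True True] elim[rule_format, of False False] by simp
  qed
  show ?thesis
    using cprobX_outcome_mediator_factorisation[OF Ypo_meas Mpo_meas mono_Y A4]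
      cprobX_mediator_identification[OF A_meas Med_meas Mpo_meas consistent mono_M indep_M positive]
    by eventually_elim (simp add: Let_def)
qed

end
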